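(* Let $q>1$, $p=\frac{q}{q-1}$, and assume Hypothesis (H$_q$). Then for every $\theta>0$, $$\Big|f\Big(\frac{m(a+b)}{2}\Big)-\frac{\Gamma(\theta+1)2^{\theta-1}}{m^\theta(b-a)^\theta}\Big[J^\theta_{(\frac{m(a+b)}{2})^-}f(ma)+J^\theta_{(\frac{m(a+b)}{2})^+}f(mb)\Big]\Big|$$ $$\le\frac{m(b-a)}{4}\Big(\frac{1}{\theta p+1}\Big)^{\frac1p}\Big\{\Big(\frac{|f'(\frac{m(a+b)}2)|^q+\alpha m|f'(a)|^q}{\alpha+1}\Big)^{\frac1q}+\Big(\frac{|f'(\frac{m(a+b)}2)|^q+\alpha m|f'(b)|^q}{\alpha+1}\Big)^{\frac1q}\Big\}.$$
   Context: Let $\Gamma$ denote Euler's Gamma function. For $\theta>0$, $c=\frac{m(a+b)}{2}$: $J^\theta_{c^-}f(ma)=\frac{1}{\Gamma(\theta)}\int_{ma}^{c}(s-ma)^{\theta-1}f(s)\,ds$ and $J^\theta_{c^+}f(mb)=\frac{1}{\Gamma(\theta)}\int_{c}^{mb}(mb-s)^{\theta-1}f(s)\,ds$. $(\alpha,m)$-convexity: for $(\alpha,m)\in[0,1]\times(0,1]$ and an interval $K\subseteq[0,\infty)$, a function $g:K\to\mathbb{R}$ is $(\alpha,m)$-convex on $K$ if $g(tX+m(1-t)Y)\le t^\alpha g(X)+m(1-t^\alpha)g(Y)$ for all $X,Y\in K$ and $t\in[0,1]$ with $tX+m(1-t)Y\in K$ (convention $0^0=1$). Hypothesis (H$_q$):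 $I\subseteq[0,\infty)$ is an interval, $f:I\to\mathbb{R}$ is differentiable on the interior $I^\circ$, $m\in(0,1]$, $\alpha\in[0,1]$, $a<b$ with $ma,b\in I^\circ$, $f'$ is Lebesgue integrable on $[ma,mb]$, and $|f'|^q$ is $(\alpha,m)$-convex on $[ma,b]$. *)

theory Defs
  imports "HOL-Analysis.Analysis"
begin

text \<open>Power t^alpha with the convention 0^0 = 1 (Isabelle's powr has 0 powr 0 = 0).\<close>
definition pw0 :: "real \<Rightarrow> real \<Rightarrow> real" where
  "pw0 t \<alpha> = (if t = 0 then (if \<alpha> = 0 then 1 else 0) else t powr \<alpha>)"

definition alpha_m_convex :: "real \<Rightarrow> real \<Rightarrow> real set \<Rightarrow> (real \<Rightarrow> real) \<Rightarrow> bool" where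
  "alpha_m_convex \<alpha> m K g \<longleftrightarrow>
     (\<forall>X\<in>K. \<forall>Y\<in>K. \<forall>t\<in>{0..1}. t * X + m * (1 - t) * Y \<in> K \<longrightarrow>
        g (t * X + m * (1 - t) * Y) \<le> pw0 t \<alpha> * g X + m * (1 - pw0 t \<alpha>) * g Y)"

definition RL_minus :: "real \<Rightarrow> real \<Rightarrow> (real \<Rightarrow> real) \<Rightarrow> real \<Rightarrow> real" where
  "RL_minus \<theta> c f x = (1 / Gamma \<theta>) * (LINT s:{x..c}|lborel. (s - x) powr (\<theta> - 1) * f s)"

definition RL_plus :: "real \<Rightarrow> real \<Rightarrow> (real \<Rightarrow> real) \<Rightarrow> real \<Rightarrow> real" where
  "RL_plus \<theta> c f x = (1 / Gamma \<theta>) * (LINT s:{c..x}|lborel. (x - s) powr (\<theta> - 1) * f s)"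

end

theory Submission
  imports Defs
begin

text \<open>Put \<open>c = m(a+b)/2\<close> and \<open>h = m(b-a)/2\<close>. Integrating by parts against the kernel
  \<open>(s - ma) powr (\<theta> - 1)\<close> on \<open>[ma, c]\<close> gives \<open>\<Gamma>(\<theta>) J\<^sup>\<theta>\<^sub>c\<^sub>- f(ma) = (h\<^sup>\<theta> f(c) - J\<^sub>1) / \<theta>\<close>,
  where \<open>J\<^sub>1\<close> integrates \<open>(s - ma) powr \<theta> * f' s\<close>; mirror-symmetrically
  \<open>\<Gamma>(\<theta>) J\<^sup>\<theta>\<^sub>c\<^sub>+ f(mb) = (h\<^sup>\<theta> f(c) + J\<^sub>2) / \<theta>\<close>. Hence the left-hand side equals
  \<open>|J\<^sub>1 - J\<^sub>2| / (2 h\<^sup>\<theta>)\<close>. Each \<open>J\<^sub>i\<close> is bounded by Hoelder's inequality, and the integral of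
  \<open>|f'|\<^sup>q\<close> over each half is bounded by integrating the \<open>(\<alpha>,m)\<close>-convexity inequality along the
  segment from \<open>ma\<close> (resp. \<open>mb\<close>) to \<open>c\<close>.\<close>

lemma Youngs_inequality_scaled:
  fixes x y e p q :: real
  assumes "p > 1" "q > 1" "1/p + 1/q = 1" "e > 0" "x \<ge> 0" "y \<ge> 0"
  shows "x * y \<le> e powr p * x powr p / p + y powr q / (q * e powr q)"
proof -
  have "(e * x) * (y / e) \<le> (e * x) powr p / p + (y / e) powr q / q"
    using assms by (intro Youngs_inequality) auto
  with assms show ?thesis
    by (simp add: powr_mult powr_divide mult.commute)
qed

text \<open>Hoelder's bound is the infimum over \<open>e\<close> of the right-hand side of \<open>bound\<close>; it is attained
  unless \<open>U = 0\<close> or \<open>W = 0\<close>, where \<open>e\<close> has to be sent to \<open>0\<close> or \<open>\<infinity>\<close> instead.\<close>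
lemma le_powr_mult_powr_if_Young_bounds:
  fixes X U W p q :: real
  assumes p: "p > 1" and q: "q > 1" and pq: "1/p + 1/q = 1" and U: "U \<ge> 0" and W: "W \<ge> 0"
    and bound: "\<And>e. e > 0 \<Longrightarrow> X \<le> e powr p * U / p + W / (q * e powr q)"
  shows "X \<le> U powr (1/p) * W powr (1/q)"
proof -
  consider "W = 0" | "U = 0" "W > 0" | "U > 0" "W > 0"
    using U W by linarith
  then show ?thesis
  proof cases
    case 1
    show ?thesis
    proof (rule ccontr)
      assume "\<not> ?thesis"
      with 1 have X: "X > 0" by simp
      define e where "e = (X * p / (2 * (U + 1))) powr (1/p)"
      from X p U have e: "e > 0" and "e powr p = X * p / (2 * (U + 1))"
        by (simp_all add: e_def powr_powr)
      with 1 p have "e powr p * U / p + W / (q * e powr q) = X * (U / (2 * (U + 1)))"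
        by simp
      also have "\<dots> < X"
        using mult_strict_left_mono[of "U / (2 * (U + 1))" 1 X] X U by simp
      finally show False using bound[OF e] by simp
    qed
  next
    case 2
    show ?thesis
    proof (rule ccontr)
      assume "\<not> ?thesis"
      with 2 have X: "X > 0" by simp
      define e where "e = (2 * W / (q * X)) powr (1/q)"
      from X q 2 have "e > 0" "e powr q = 2 * W / (q * X)"
        by (simp_all add: e_def powr_powr)
      with bound[of e] 2 X q show False
        by (simp add: field_simps)
    qed
  next
    case 3
    have pq': "p + q = p * q" using pq p q by (simp add: field_simps)
    define e where "e = (W / U) powr (1 / (p + q))"
    have e: "e > 0" using 3 by (simp add: e_def)
    have ep: "e powr p = (W / U) powr (1/q)" and eq: "e powr q = (W / U) powr (1/p)"
      unfolding e_def using 3 p q pq' by (simp_all add: powr_powr)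
    have "e powr p * U = U powr (1/p) * W powr (1/q)"
      unfolding ep using 3 pq
      by (simp add: powr_divide powr_diff[symmetric] field_simps flip: powr_add)
    moreover have "W / e powr q = U powr (1/p) * W powr (1/q)"
      unfolding eq using 3 pq by (simp add: powr_divide field_simps flip: powr_add)
    ultimately have "e powr p * U / p + W / (q * e powr q)
                     = U powr (1/p) * W powr (1/q) * (1/p + 1/q)"
      by (simp add: distrib_left mult.commute[of q] flip: divide_divide_eq_left)
    with bound[OF e] pq show ?thesis by simp
  qed
qed

lemma Holder_inequality_integral:
  fixes w g :: "'a::euclidean_space \<Rightarrow> real"
  assumes p: "p > 1" and q: "q > 1" and pq: "1/p + 1/q = 1" and S: "S \<in> sets lebesgue"
    and w_meas: "w \<in> borel_measurable (lebesgue_on S)" and w_nonneg: "\<And>x. x \<in> S \<Longrightarrow> w x \<ge> 0"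
    and w_int: "(\<lambda>x. w x powr p) integrable_on S"
    and g_meas: "g \<in> borel_measurable (lebesgue_on S)" and g_nonneg: "\<And>x. x \<in> S \<Longrightarrow> g x \<ge> 0"
    and g_int: "(\<lambda>x. g x powr q) integrable_on S"
  shows "(\<lambda>x. w x * g x) integrable_on S"
    and "integral S (\<lambda>x. w x * g x)
           \<le> integral S (\<lambda>x. w x powr p) powr (1/p) * integral S (\<lambda>x. g x powr q) powr (1/q)"
proof -
  define Young where "Young e x = e powr p * w x powr p / p + g x powr q / (q * e powr q)" for e x
  have Young_int: "Young e integrable_on S" for e
    unfolding Young_def using w_int g_int
    by (intro integrable_add integrable_on_divide integrable_on_mult_right) auto
  have Young_ge: "w x * g x \<le> Young e x" if "e > 0" "x \<in> S" for e x
    unfolding Young_def using that w_nonneg g_nonneg by (intro Youngs_inequality_scaled p q pq) auto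
  show int: "(\<lambda>x. w x * g x) integrable_on S"
  proof (rule measurable_bounded_by_integrable_imp_integrable_real[OF _ Young_int _ S])
    show "(\<lambda>x. w x * g x) \<in> borel_measurable (lebesgue_on S)"
      using w_meas g_meas by measurable
    show "\<bar>w x * g x\<bar> \<le> Young 1 x" if "x \<in> S" for x
      using Young_ge[of 1 x] that w_nonneg g_nonneg by simp
  qed
  show "integral S (\<lambda>x. w x * g x)
          \<le> integral S (\<lambda>x. w x powr p) powr (1/p) * integral S (\<lambda>x. g x powr q) powr (1/q)"
  proof (rule le_powr_mult_powr_if_Young_bounds[OF p q pq])
    show "integral S (\<lambda>x. w x powr p) \<ge> 0" "integral S (\<lambda>x. g x powr q) \<ge> 0"
      using w_int g_int by (auto intro: integral_nonneg)
    fix e :: real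
    assume "e > 0"
    then have "integral S (\<lambda>x. w x * g x) \<le> integral S (Young e)"
      using int Young_int Young_ge by (intro integral_le) auto
    also have "\<dots> = e powr p * integral S (\<lambda>x. w x powr p) / p
                     + integral S (\<lambda>x. g x powr q) / (q * e powr q)"
      unfolding Young_def using w_int g_int
      by (simp add: integral_add integrable_on_divide integrable_on_mult_right)
    finally show "integral S (\<lambda>x. w x * g x) \<le> e powr p * integral S (\<lambda>x. w x powr p) / p
                     + integral S (\<lambda>x. g x powr q) / (q * e powr q)" .
  qed
qed

lemma has_integral_powr_diff_left:
  fixes L R r :: real
  assumes "r > -1" "L \<le> R"
  shows "((\<lambda>s. (s - L) powr r) has_integral (R - L) powr (r + 1) / (r + 1)) {L..R}"
  using has_integral_shift_real_ivl[OF has_integral_powr_from_0[of r "R - L"], of "-L"] assms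
  by simp

lemma has_integral_powr_diff_right:
  fixes L R r :: real
  assumes "r > -1" "L \<le> R"
  shows "((\<lambda>s. (R - s) powr r) has_integral (R - L) powr (r + 1) / (r + 1)) {L..R}"
proof -
  have "((\<lambda>s. (s - - R) powr r) has_integral (R - L) powr (r + 1) / (r + 1)) {-R..-L}"
    using has_integral_powr_diff_left[of r "-R" "-L"] assms by simp
  then show ?thesis
    by (simp add: has_integral_reflect_real[symmetric, of "\<lambda>s. (R - s) powr r"] add.commute)
qed

lemma has_integral_pw0_affine:
  fixes u v \<alpha> :: real
  assumes \<alpha>: "0 \<le> \<alpha>" and uv: "u \<noteq> v"
  shows "((\<lambda>s. pw0 ((s - u) / (v - u)) \<alpha>) has_integral \<bar>v - u\<bar> / (\<alpha> + 1)) {min u v..max u v}"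
proof (cases "u < v")
  case True
  have "((\<lambda>s. (s - u) powr \<alpha> / (v - u) powr \<alpha>)
          has_integral (v - u) powr (\<alpha> + 1) / (\<alpha> + 1) / (v - u) powr \<alpha>) {u..v}"
    using \<alpha> True by (intro has_integral_divide has_integral_powr_diff_left) auto
  then have powr_int:
      "((\<lambda>s. (s - u) powr \<alpha> / (v - u) powr \<alpha>) has_integral (v - u) / (\<alpha> + 1)) {u..v}"
    using True by (simp add: powr_add)
  have "((\<lambda>s. pw0 ((s - u) / (v - u)) \<alpha>) has_integral (v - u) / (\<alpha> + 1)) {u..v}"
    by (rule has_integral_spike_finite[OF _ _ powr_int, of "{u}"])
       (use True in \<open>auto simp: pw0_def powr_divide\<close>)
  with True show ?thesis
    by (simp add: min_def max_def)
next
  case False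
  with uv have vu: "v < u" by simp
  have "((\<lambda>s. (u - s) powr \<alpha> / (u - v) powr \<alpha>)
          has_integral (u - v) powr (\<alpha> + 1) / (\<alpha> + 1) / (u - v) powr \<alpha>) {v..u}"
    using \<alpha> vu by (intro has_integral_divide has_integral_powr_diff_right) auto
  then have powr_int:
      "((\<lambda>s. (u - s) powr \<alpha> / (u - v) powr \<alpha>) has_integral (u - v) / (\<alpha> + 1)) {v..u}"
    using vu by (simp add: powr_add)
  have "pw0 ((s - u) / (v - u)) \<alpha> = (u - s) powr \<alpha> / (u - v) powr \<alpha>" if "s \<in> {v..u} - {u}" for s
  proof -
    have "(s - u) / (v - u) = (u - s) / (u - v)"
      by (metis minus_diff_eq minus_divide_divide)
    with that show ?thesis
      by (simp add: pw0_def powr_divide)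
  qed
  then have "((\<lambda>s. pw0 ((s - u) / (v - u)) \<alpha>) has_integral (u - v) / (\<alpha> + 1)) {v..u}"
    by (intro has_integral_spike_finite[OF _ _ powr_int, of "{u}"]) auto
  with vu show ?thesis
    by (simp add: min_def max_def)
qed

lemma alpha_m_convex_integral_le:
  fixes g :: "real \<Rightarrow> real" and K :: "real set" and \<alpha> m X Y :: real
  defines "S \<equiv> {min (m * Y) X..max (m * Y) X}"
  assumes conv: "alpha_m_convex \<alpha> m K g" and \<alpha>: "0 \<le> \<alpha>"
    and X: "X \<in> K" and Y: "Y \<in> K" and XY: "X \<noteq> m * Y" and SK: "S \<subseteq> K"
    and meas: "g \<in> borel_measurable (lebesgue_on S)" and nonneg: "\<And>s. s \<in> S \<Longrightarrow> 0 \<le> g s"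
  shows "g integrable_on S"
    and "integral S g \<le> \<bar>X - m * Y\<bar> * ((g X + \<alpha> * m * g Y) / (\<alpha> + 1))"
proof -
  define bound where "bound s = m * g Y + pw0 ((s - m * Y) / (X - m * Y)) \<alpha> * (g X - m * g Y)" for s
  have bound_int: "(bound has_integral \<bar>X - m * Y\<bar> * ((g X + \<alpha> * m * g Y) / (\<alpha> + 1))) S"
  proof -
    have "(bound has_integral \<bar>X - m * Y\<bar> * (m * g Y) + \<bar>X - m * Y\<bar> / (\<alpha> + 1) * (g X - m * g Y)) S"
      unfolding bound_def S_def
      by (intro has_integral_add has_integral_mult_left has_integral_pw0_affine \<alpha> XY
          has_integral_const_real[THEN has_integral_eq_rhs]) (use XY in auto)
    moreover have "\<bar>X - m * Y\<bar> * (m * g Y) + \<bar>X - m * Y\<bar> / (\<alpha> + 1) * (g X - m * g Y)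
                   = \<bar>X - m * Y\<bar> * ((g X + \<alpha> * m * g Y) / (\<alpha> + 1))"
      using \<alpha> by (simp add: field_simps)
    ultimately show ?thesis by simp
  qed
  have g_le: "g s \<le> bound s" if s: "s \<in> S" for s
  proof -
    define t where "t = (s - m * Y) / (X - m * Y)"
    have t: "t \<in> {0..1}"
      using s XY by (auto simp: t_def S_def divide_simps min_def max_def split: if_splits)
    have "t * (X - m * Y) = s - m * Y"
      using XY by (simp add: t_def)
    then have "t * X + m * (1 - t) * Y = s"
      by (simp add: algebra_simps)
    then have "g s \<le> pw0 t \<alpha> * g X + m * (1 - pw0 t \<alpha>) * g Y"
      using conv X Y t s SK unfolding alpha_m_convex_def by force
    then show ?thesis
      by (simp add: bound_def t_def algebra_simps)
  qed
  show int: "g integrable_on S"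
    using bound_int g_le nonneg
    by (intro measurable_bounded_by_integrable_imp_integrable_real[OF meas, of bound])
       (auto simp: S_def)
  show "integral S g \<le> \<bar>X - m * Y\<bar> * ((g X + \<alpha> * m * g Y) / (\<alpha> + 1))"
    using integral_le[OF int _ g_le] bound_int by (auto simp: integral_unique)
qed

lemma has_integral_powr_kernel_by_parts:
  fixes f f' :: "real \<Rightarrow> real" and L c \<theta> :: real
  assumes \<theta>: "\<theta> > 0" and Lc: "L \<le> c" and cont: "continuous_on {L..c} f"
    and der: "\<And>x. x \<in> {L<..<c} \<Longrightarrow> (f has_real_derivative f' x) (at x)"
    and int: "(\<lambda>s. (s - L) powr \<theta> * f' s) integrable_on {L..c}"
  shows "((\<lambda>s. (s - L) powr (\<theta> - 1) * f s)
           has_integral ((c - L) powr \<theta> * f c - integral {L..c} (\<lambda>s. (s - L) powr \<theta> * f' s)) / \<theta>)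
         {L..c}"
proof (rule integration_by_parts_interior[OF bounded_bilinear_mult Lc _ cont])
  show "continuous_on {L..c} (\<lambda>s. (s - L) powr \<theta> / \<theta>)"
    using \<theta> by (intro continuous_intros continuous_on_powr') (auto intro!: continuous_intros)
  show "((\<lambda>s. (s - L) powr \<theta> / \<theta>) has_vector_derivative (x - L) powr (\<theta> - 1)) (at x)"
    if "x \<in> {L<..<c}" for x
  proof -
    have "((\<lambda>s. (s - L) powr \<theta> / \<theta>) has_real_derivative (\<theta> * (x - L) powr (\<theta> - 1)) / \<theta>) (at x)"
      using that DERIV_fun_powr[of "\<lambda>s. s - L" 1 x \<theta>]
      by (intro DERIV_cdivide) (auto intro!: derivative_eq_intros)
    with \<theta> show ?thesis
      by (simp add: has_real_derivative_iff_has_vector_derivative)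
  qed
  show "(f has_vector_derivative f' x) (at x)" if "x \<in> {L<..<c}" for x
    using der[OF that] by (simp add: has_real_derivative_iff_has_vector_derivative)
  have "((\<lambda>s. (s - L) powr \<theta> * f' s / \<theta>)
          has_integral integral {L..c} (\<lambda>s. (s - L) powr \<theta> * f' s) / \<theta>) {L..c}"
    using int by (intro has_integral_divide integrable_integral)
  then show "((\<lambda>s. (s - L) powr \<theta> / \<theta> * f' s) has_integral
      (c - L) powr \<theta> / \<theta> * f c - (L - L) powr \<theta> / \<theta> * f L
      - ((c - L) powr \<theta> * f c - integral {L..c} (\<lambda>s. (s - L) powr \<theta> * f' s)) / \<theta>) {L..c}"
    by (simp add: diff_divide_distrib)
qed

lemma powr_kernel_integral_left_estimate:
  fixes f f' :: "real \<Rightarrow> real" and L c \<theta> p q W :: real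
  assumes \<theta>: "\<theta> > 0" and p: "p > 1" and q: "q > 1" and pq: "1/p + 1/q = 1" and Lc: "L < c"
    and cont: "continuous_on {L..c} f"
    and der: "\<And>x. x \<in> {L<..<c} \<Longrightarrow> (f has_real_derivative f' x) (at x)"
    and f'_int: "f' integrable_on {L..c}"
    and q_int: "(\<lambda>s. \<bar>f' s\<bar> powr q) integrable_on {L..c}"
    and q_mean: "integral {L..c} (\<lambda>s. \<bar>f' s\<bar> powr q) \<le> (c - L) * W"
  obtains J
  where "((\<lambda>s. (s - L) powr (\<theta> - 1) * f s) has_integral ((c - L) powr \<theta> * f c - J) / \<theta>) {L..c}"
    and "\<bar>J\<bar> \<le> (c - L) powr (\<theta> + 1) * (1 / (\<theta> * p + 1)) powr (1/p) * W powr (1/q)"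
proof
  define w where "w s = (s - L) powr \<theta>" for s
  define U where "U = (c - L) powr (\<theta> * p + 1) / (\<theta> * p + 1)"
  have f'_meas: "f' \<in> borel_measurable (lebesgue_on {L..c})"
    using f'_int by (rule integrable_imp_measurable)
  have w_meas: "w \<in> borel_measurable (lebesgue_on {L..c})"
    unfolding w_def using \<theta>
    by (intro continuous_imp_measurable_on_sets_lebesgue continuous_on_powr')
       (auto intro!: continuous_intros)
  have \<theta>p: "\<theta> * p > 0"
    using \<theta> p by simp
  have "((\<lambda>s. (s - L) powr (\<theta> * p)) has_integral U) {L..c}"
    unfolding U_def using \<theta>p Lc by (intro has_integral_powr_diff_left) auto
  then have w_pow: "((\<lambda>s. w s powr p) has_integral U) {L..c}"
    by (rule has_integral_eq[rotated]) (simp add: w_def powr_powr)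
  have abs_f'_meas: "(\<lambda>s. \<bar>f' s\<bar>) \<in> borel_measurable (lebesgue_on {L..c})"
    using f'_meas by measurable
  have w_int: "(\<lambda>s. w s powr p) integrable_on {L..c}"
    using w_pow by blast
  have "{L..c} \<in> sets lebesgue" "\<And>s. 0 \<le> w s" "\<And>s. 0 \<le> \<bar>f' s\<bar>"
    by (simp_all add: w_def)
  note Holder =
    Holder_inequality_integral[OF p q pq this(1) w_meas this(2) w_int abs_f'_meas this(3) q_int]
  have wf'_abs_int: "(\<lambda>s. w s * \<bar>f' s\<bar>) integrable_on {L..c}"
    by (rule Holder(1))
  have wf'_int: "(\<lambda>s. w s * f' s) integrable_on {L..c}"
  proof (rule measurable_bounded_by_integrable_imp_integrable_real[OF _ wf'_abs_int])
    show "(\<lambda>s. w s * f' s) \<in> borel_measurable (lebesgue_on {L..c})"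
      using w_meas f'_meas by measurable
  qed (auto simp: abs_mult w_def)
  show "((\<lambda>s. (s - L) powr (\<theta> - 1) * f s)
          has_integral ((c - L) powr \<theta> * f c - integral {L..c} (\<lambda>s. w s * f' s)) / \<theta>) {L..c}"
    using has_integral_powr_kernel_by_parts[OF \<theta> _ cont der] Lc wf'_int by (simp add: w_def)
  have q_int_nonneg: "integral {L..c} (\<lambda>s. \<bar>f' s\<bar> powr q) \<ge> 0"
    using q_int by (simp add: integral_nonneg)
  with q_mean have "0 \<le> (c - L) * W"
    by linarith
  with Lc have W: "W \<ge> 0"
    by (simp add: zero_le_mult_iff)
  have "\<bar>integral {L..c} (\<lambda>s. w s * f' s)\<bar> \<le> integral {L..c} (\<lambda>s. w s * \<bar>f' s\<bar>)"
    using integral_norm_bound_integral[OF wf'_int wf'_abs_int] by (simp add: abs_mult w_def)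
  also have "\<dots> \<le> U powr (1/p) * integral {L..c} (\<lambda>s. \<bar>f' s\<bar> powr q) powr (1/q)"
    using Holder(2) w_pow by (simp add: integral_unique)
  also have "\<dots> \<le> U powr (1/p) * ((c - L) * W) powr (1/q)"
    using q_mean q q_int_nonneg by (intro mult_left_mono powr_mono2) auto
  also have "\<dots> = (c - L) powr (\<theta> + 1) * (1 / (\<theta> * p + 1)) powr (1/p) * W powr (1/q)"
  proof -
    have "U powr (1/p) = (c - L) powr (\<theta> + 1/p) * (1 / (\<theta> * p + 1)) powr (1/p)"
      unfolding U_def using Lc \<theta>p p by (simp add: powr_divide powr_powr field_simps)
    moreover have "((c - L) * W) powr (1/q) = (c - L) powr (1/q) * W powr (1/q)"
      using Lc W by (simp add: powr_mult)
    moreover have "(c - L) powr (\<theta> + 1/p) * (c - L) powr (1/q) = (c - L) powr (\<theta> + 1)"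
      using pq by (simp add: add.assoc flip: powr_add)
    ultimately show ?thesis by (simp add: algebra_simps)
  qed
  finally show "\<bar>integral {L..c} (\<lambda>s. w s * f' s)\<bar>
                  \<le> (c - L) powr (\<theta> + 1) * (1 / (\<theta> * p + 1)) powr (1/p) * W powr (1/q)" .
qed

lemma powr_kernel_integral_right_estimate:
  fixes f f' :: "real \<Rightarrow> real" and c R \<theta> p q W :: real
  assumes \<theta>: "\<theta> > 0" and p: "p > 1" and q: "q > 1" and pq: "1/p + 1/q = 1" and cR: "c < R"
    and cont: "continuous_on {c..R} f"
    and der: "\<And>x. x \<in> {c<..<R} \<Longrightarrow> (f has_real_derivative f' x) (at x)"
    and f'_int: "f' integrable_on {c..R}"
    and q_int: "(\<lambda>s. \<bar>f' s\<bar> powr q) integrable_on {c..R}"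
    and q_mean: "integral {c..R} (\<lambda>s. \<bar>f' s\<bar> powr q) \<le> (R - c) * W"
  obtains J
  where "((\<lambda>s. (R - s) powr (\<theta> - 1) * f s) has_integral ((R - c) powr \<theta> * f c + J) / \<theta>) {c..R}"
    and "\<bar>J\<bar> \<le> (R - c) powr (\<theta> + 1) * (1 / (\<theta> * p + 1)) powr (1/p) * W powr (1/q)"
proof -
  have "continuous_on {-R..-c} (\<lambda>u. f (- u))"
    by (rule continuous_on_compose2[OF cont]) (auto intro: continuous_intros)
  moreover have "((\<lambda>u. f (- u)) has_real_derivative - f' (- x)) (at x)" if "x \<in> {-R<..<-c}" for x
    using der[of "- x"] that by (simp flip: DERIV_mirror)
  moreover have "(\<lambda>u. - f' (- u)) integrable_on {-R..-c}"
    using f'_int by (simp add: integrable_neg)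
  moreover have "(\<lambda>u. \<bar>- f' (- u)\<bar> powr q) integrable_on {-R..-c}"
    using q_int Henstock_Kurzweil_Integration.integrable_reflect_real[where f = "\<lambda>s. \<bar>f' s\<bar> powr q"]
    by simp
  moreover have "integral {-R..-c} (\<lambda>u. \<bar>- f' (- u)\<bar> powr q) \<le> (- c - - R) * W"
    using q_mean Henstock_Kurzweil_Integration.integral_reflect_real[where f = "\<lambda>s. \<bar>f' s\<bar> powr q"]
    by simp
  ultimately obtain J
    where J_int: "((\<lambda>u. (u - - R) powr (\<theta> - 1) * f (- u))
                    has_integral ((- c - - R) powr \<theta> * f (- (- c)) - J) / \<theta>) {-R..-c}"
      and J_le: "\<bar>J\<bar> \<le> (- c - - R) powr (\<theta> + 1) * (1 / (\<theta> * p + 1)) powr (1/p) * W powr (1/q)"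
    using powr_kernel_integral_left_estimate
        [OF \<theta> p q pq, of "- R" "- c" "\<lambda>u. f (- u)" "\<lambda>u. - f' (- u)" W] cR
    by auto
  show ?thesis
  proof
    show "((\<lambda>s. (R - s) powr (\<theta> - 1) * f s) has_integral ((R - c) powr \<theta> * f c + - J) / \<theta>) {c..R}"
      using J_int has_integral_reflect_real[of "\<lambda>s. (R - s) powr (\<theta> - 1) * f s"]
      by (simp add: add.commute)
    show "\<bar>- J\<bar> \<le> (R - c) powr (\<theta> + 1) * (1 / (\<theta> * p + 1)) powr (1/p) * W powr (1/q)"
      using J_le by simp
  qed
qed

text \<open>\<open>RL_minus\<close> and \<open>RL_plus\<close> are Bochner integrals over \<open>lborel\<close>, which default to \<open>0\<close> for
  non-integrable integrands; this lemma is what identifies them with Henstock-Kurzweil integrals.\<close>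
lemma set_integrable_mult_continuous_on:
  fixes k f :: "real \<Rightarrow> real"
  assumes k_meas: "k \<in> borel_measurable borel" and k_int: "k integrable_on {a..b}"
    and k_nonneg: "\<And>s. s \<in> {a..b} \<Longrightarrow> 0 \<le> k s" and cont: "continuous_on {a..b} f"
  shows "set_integrable lborel {a..b} (\<lambda>s. k s * f s)"
proof -
  have "k absolutely_integrable_on {a..b}"
    using k_int k_nonneg by (subst absolutely_integrable_on_iff_nonneg) auto
  then have k_set_int: "set_integrable lborel {a..b} k"
    using k_meas unfolding set_integrable_def by (subst (asm) integrable_completion) auto
  obtain M where M: "\<And>s. s \<in> {a..b} \<Longrightarrow> \<bar>f s\<bar> \<le> M"
    using compact_imp_bounded[OF compact_continuous_image[OF cont compact_Icc]]
    unfolding bounded_iff by (metis image_eqI real_norm_def)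
  show ?thesis
  proof (rule set_integrable_bound)
    show "set_integrable lborel {a..b} (\<lambda>s. M * k s)"
      using k_set_int by simp
    have "(\<lambda>s. indicator {a..b} s *\<^sub>R f s) \<in> borel_measurable borel"
      by (rule borel_measurable_continuous_on_indicator[OF _ cont]) auto
    then have "(\<lambda>s. k s * (indicator {a..b} s *\<^sub>R f s)) \<in> borel_measurable borel"
      using k_meas by measurable
    then show "set_borel_measurable lborel {a..b} (\<lambda>s. k s * f s)"
      unfolding set_borel_measurable_def by (simp add: mult.left_commute)
    show "AE s in lborel. s \<in> {a..b} \<longrightarrow> norm (k s * f s) \<le> norm (M * k s)"
    proof (intro AE_I2 impI)
      fix s assume "s \<in> {a..b}"
      then have "k s * \<bar>f s\<bar> \<le> k s * \<bar>M\<bar>"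
        using M k_nonneg by (intro mult_left_mono) force+
      with \<open>s \<in> {a..b}\<close> k_nonneg show "norm (k s * f s) \<le> norm (M * k s)"
        by (simp add: abs_mult mult.commute)
    qed
  qed
qed

lemma RL_minus_eq_integral:
  fixes f :: "real \<Rightarrow> real"
  assumes \<theta>: "\<theta> > 0" and Lc: "L \<le> c" and cont: "continuous_on {L..c} f"
  shows "RL_minus \<theta> c f L = integral {L..c} (\<lambda>s. (s - L) powr (\<theta> - 1) * f s) / Gamma \<theta>"
proof -
  have "(\<lambda>s. (s - L) powr (\<theta> - 1)) integrable_on {L..c}"
    using has_integral_powr_diff_left[of "\<theta> - 1" L c] \<theta> Lc by auto
  then have "set_integrable lborel {L..c} (\<lambda>s. (s - L) powr (\<theta> - 1) * f s)"
    by (intro set_integrable_mult_continuous_on cont) auto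
  then show ?thesis
    unfolding RL_minus_def by (simp add: set_borel_integral_eq_integral(2))
qed

lemma RL_plus_eq_integral:
  fixes f :: "real \<Rightarrow> real"
  assumes \<theta>: "\<theta> > 0" and cR: "c \<le> R" and cont: "continuous_on {c..R} f"
  shows "RL_plus \<theta> c f R = integral {c..R} (\<lambda>s. (R - s) powr (\<theta> - 1) * f s) / Gamma \<theta>"
proof -
  have "(\<lambda>s. (R - s) powr (\<theta> - 1)) integrable_on {c..R}"
    using has_integral_powr_diff_right[of "\<theta> - 1" c R] \<theta> cR by auto
  then have "set_integrable lborel {c..R} (\<lambda>s. (R - s) powr (\<theta> - 1) * f s)"
    by (intro set_integrable_mult_continuous_on cont) auto
  then show ?thesis
    unfolding RL_plus_def by (simp add: set_borel_integral_eq_integral(2))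
qed

lemma RL_midpoint_inequality:
  fixes f f' :: "real \<Rightarrow> real" and L R \<theta> p q W\<^sub>1 W\<^sub>2 :: real
  defines "c \<equiv> (L + R) / 2"
  assumes \<theta>: "\<theta> > 0" and p: "p > 1" and q: "q > 1" and pq: "1/p + 1/q = 1" and LR: "L < R"
    and cont: "continuous_on {L..R} f"
    and der: "\<And>x. x \<in> {L<..<R} \<Longrightarrow> (f has_real_derivative f' x) (at x)"
    and f'_int: "f' integrable_on {L..R}"
    and q_int\<^sub>1: "(\<lambda>s. \<bar>f' s\<bar> powr q) integrable_on {L..c}"
    and q_mean\<^sub>1: "integral {L..c} (\<lambda>s. \<bar>f' s\<bar> powr q) \<le> (c - L) * W\<^sub>1"
    and q_int\<^sub>2: "(\<lambda>s. \<bar>f' s\<bar> powr q) integrable_on {c..R}"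
    and q_mean\<^sub>2: "integral {c..R} (\<lambda>s. \<bar>f' s\<bar> powr q) \<le> (R - c) * W\<^sub>2"
  shows "\<bar>f c - Gamma (\<theta> + 1) * 2 powr (\<theta> - 1) / (R - L) powr \<theta>
                 * (RL_minus \<theta> c f L + RL_plus \<theta> c f R)\<bar>
         \<le> (R - L) / 4 * (1 / (\<theta> * p + 1)) powr (1/p) * (W\<^sub>1 powr (1/q) + W\<^sub>2 powr (1/q))"
proof -
  define h where "h = (R - L) / 2"
  define C where "C = (1 / (\<theta> * p + 1)) powr (1/p)"
  have h: "h > 0" "c - L = h" "R - c = h"
    using LR by (simp_all add: h_def c_def field_simps)
  have sub: "{L..c} \<subseteq> {L..R}" "{c..R} \<subseteq> {L..R}"
    using h by auto
  obtain J\<^sub>1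
    where J\<^sub>1: "((\<lambda>s. (s - L) powr (\<theta> - 1) * f s) has_integral (h powr \<theta> * f c - J\<^sub>1) / \<theta>) {L..c}"
      and J\<^sub>1_le: "\<bar>J\<^sub>1\<bar> \<le> h powr (\<theta> + 1) * C * W\<^sub>1 powr (1/q)"
    using powr_kernel_integral_left_estimate[OF \<theta> p q pq _ continuous_on_subset[OF cont sub(1)] der
        integrable_on_subinterval[OF f'_int sub(1)] q_int\<^sub>1 q_mean\<^sub>1] h
    unfolding C_def by auto
  obtain J\<^sub>2
    where J\<^sub>2: "((\<lambda>s. (R - s) powr (\<theta> - 1) * f s) has_integral (h powr \<theta> * f c + J\<^sub>2) / \<theta>) {c..R}"
      and J\<^sub>2_le: "\<bar>J\<^sub>2\<bar> \<le> h powr (\<theta> + 1) * C * W\<^sub>2 powr (1/q)"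
    using powr_kernel_integral_right_estimate[OF \<theta> p q pq _ continuous_on_subset[OF cont sub(2)] der
        integrable_on_subinterval[OF f'_int sub(2)] q_int\<^sub>2 q_mean\<^sub>2] h
    unfolding C_def by auto
  have Gamma: "Gamma (\<theta> + 1) = \<theta> * Gamma \<theta>" "Gamma \<theta> \<noteq> 0"
    using \<theta> by (auto intro!: Gamma_plus1 elim!: nonpos_Ints_cases simp: Gamma_eq_zero_iff)
  have RL_minus: "RL_minus \<theta> c f L = (h powr \<theta> * f c - J\<^sub>1) / \<theta> / Gamma \<theta>"
    using RL_minus_eq_integral[OF \<theta> _ continuous_on_subset[OF cont sub(1)]]
      integral_unique[OF J\<^sub>1] h
    by simp
  have RL_plus: "RL_plus \<theta> c f R = (h powr \<theta> * f c + J\<^sub>2) / \<theta> / Gamma \<theta>"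
    using RL_plus_eq_integral[OF \<theta> _ continuous_on_subset[OF cont sub(2)]]
      integral_unique[OF J\<^sub>2] h
    by simp
  have "(R - L) powr \<theta> = 2 powr \<theta> * h powr \<theta>"
    using h by (simp add: h_def powr_divide)
  then have "Gamma (\<theta> + 1) * 2 powr (\<theta> - 1) / (R - L) powr \<theta> * (RL_minus \<theta> c f L + RL_plus \<theta> c f R)
             = f c + (J\<^sub>2 - J\<^sub>1) / (2 * h powr \<theta>)"
    using Gamma \<theta> h(1) by (simp add: RL_minus RL_plus powr_diff field_simps)
  then have "\<bar>f c - Gamma (\<theta> + 1) * 2 powr (\<theta> - 1) / (R - L) powr \<theta>
                     * (RL_minus \<theta> c f L + RL_plus \<theta> c f R)\<bar>
             = \<bar>J\<^sub>1 - J\<^sub>2\<bar> / (2 * h powr \<theta>)"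
    using h by (simp add: abs_minus_commute)
  also have "\<dots> \<le> (h powr (\<theta> + 1) * C * W\<^sub>1 powr (1/q) + h powr (\<theta> + 1) * C * W\<^sub>2 powr (1/q))
                   / (2 * h powr \<theta>)"
    using J\<^sub>1_le J\<^sub>2_le h by (intro divide_right_mono) auto
  also have "\<dots> = (R - L) / 4 * C * (W\<^sub>1 powr (1/q) + W\<^sub>2 powr (1/q))"
    using h by (simp add: h_def powr_add field_simps)
  finally show ?thesis
    unfolding C_def .
qed

lemma alpha_m_convex_RL_midpoint_inequality:
  fixes f f' :: "real \<Rightarrow> real" and K :: "real set" and m \<alpha> a b q p \<theta> :: real
  defines "c \<equiv> m * (a + b) / 2"
  assumes \<theta>: "\<theta> > 0" and p: "p > 1" and q: "q > 1" and pq: "1/p + 1/q = 1"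
    and m: "m > 0" and \<alpha>: "0 \<le> \<alpha>" and ab: "a < b"
    and cont: "continuous_on {m * a..m * b} f"
    and der: "\<And>x. x \<in> {m * a<..<m * b} \<Longrightarrow> (f has_real_derivative f' x) (at x)"
    and f'_int: "f' integrable_on {m * a..m * b}"
    and conv: "alpha_m_convex \<alpha> m K (\<lambda>x. \<bar>f' x\<bar> powr q)"
    and K: "a \<in> K" "b \<in> K" "{m * a..m * b} \<subseteq> K"
  shows "\<bar>f c - Gamma (\<theta> + 1) * 2 powr (\<theta> - 1) / (m powr \<theta> * (b - a) powr \<theta>)
                 * (RL_minus \<theta> c f (m * a) + RL_plus \<theta> c f (m * b))\<bar>
         \<le> m * (b - a) / 4 * (1 / (\<theta> * p + 1)) powr (1 / p)
           * (((\<bar>f' c\<bar> powr q + \<alpha> * m * \<bar>f' a\<bar> powr q) / (\<alpha> + 1)) powr (1 / q)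
            + ((\<bar>f' c\<bar> powr q + \<alpha> * m * \<bar>f' b\<bar> powr q) / (\<alpha> + 1)) powr (1 / q))"
proof -
  define g where "g = (\<lambda>x. \<bar>f' x\<bar> powr q)"
  have c: "m * a < c" "c < m * b" and c_mid: "(m * a + m * b) / 2 = c"
    using m ab by (simp_all add: c_def field_simps)
  have g_meas: "g \<in> borel_measurable (lebesgue_on {u..v})" if "{u..v} \<subseteq> {m * a..m * b}" for u v
    using integrable_imp_measurable[OF integrable_on_subinterval[OF f'_int that]]
    unfolding g_def by measurable
  have K': "c \<in> K" "{m * a..c} \<subseteq> K" "{c..m * b} \<subseteq> K"
    using K(3) c by auto
  have segments: "min (m * a) c = m * a" "max (m * a) c = c" "min (m * b) c = c" "max (m * b) c = m * b"
    using c by auto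
  have left: "g integrable_on {m * a..c}"
      "integral {m * a..c} g \<le> (c - m * a) * ((g c + \<alpha> * m * g a) / (\<alpha> + 1))"
    using alpha_m_convex_integral_le[OF conv[folded g_def] \<alpha> K'(1) K(1)] g_meas[of "m * a" c] c K'
    unfolding segments by (auto simp: g_def)
  have right: "g integrable_on {c..m * b}"
      "integral {c..m * b} g \<le> (m * b - c) * ((g c + \<alpha> * m * g b) / (\<alpha> + 1))"
    using alpha_m_convex_integral_le[OF conv[folded g_def] \<alpha> K'(1) K(2)] g_meas[of c "m * b"] c K'
    unfolding segments by (auto simp: g_def)
  have "m * b - m * a = m * (b - a)"
    by (simp add: algebra_simps)
  moreover have "(m * (b - a)) powr \<theta> = m powr \<theta> * (b - a) powr \<theta>"
    using m ab by (simp add: powr_mult)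
  ultimately show ?thesis
    using RL_midpoint_inequality[OF \<theta> p q pq _ cont der f'_int, unfolded c_mid] left right c
    unfolding g_def by simp
qed

theorem mainTheorem12:
  fixes f f' :: "real \<Rightarrow> real" and I :: "real set"
    and m \<alpha> a b q p \<theta> :: real
  assumes hq: "q > 1" and hp: "p = q / (q - 1)"
    and hI: "is_interval I" "I \<subseteq> {0..}"
    and hderiv: "\<forall>x\<in>interior I. (f has_real_derivative f' x) (at x)"
    and hm: "0 < m" "m \<le> 1"
    and h\<alpha>: "0 \<le> \<alpha>" "\<alpha> \<le> 1"
    and hab: "a < b" "m * a \<in> interior I" "b \<in> interior I"
    and hint: "set_integrable lborel {m * a..m * b} f'"
    and hconv: "alpha_m_convex \<alpha> m {m * a..b} (\<lambda>x. \<bar>f' x\<bar> powr q)"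
    and h\<theta>: "\<theta> > 0"
  shows "\<bar>f (m * (a + b) / 2)
           - Gamma (\<theta> + 1) * 2 powr (\<theta> - 1) / (m powr \<theta> * (b - a) powr \<theta>)
             * (RL_minus \<theta> (m * (a + b) / 2) f (m * a) + RL_plus \<theta> (m * (a + b) / 2) f (m * b))\<bar>
         \<le> m * (b - a) / 4 * (1 / (\<theta> * p + 1)) powr (1 / p)
           * (((\<bar>f' (m * (a + b) / 2)\<bar> powr q + \<alpha> * m * \<bar>f' a\<bar> powr q) / (\<alpha> + 1)) powr (1 / q)
            + ((\<bar>f' (m * (a + b) / 2)\<bar> powr q + \<alpha> * m * \<bar>f' b\<bar> powr q) / (\<alpha> + 1)) powr (1 / q))"
proof -
  have p: "p > 1" and pq: "1/p + 1/q = 1"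
    using hq unfolding hp by (simp_all add: field_simps)
  have "m * a \<ge> 0"
    using hab(2) hI(2) interior_subset by blast
  then have ma: "m * a \<le> a" "0 \<le> a"
    using hm by (simp_all add: mult_left_le_one_le zero_le_mult_iff)
  then have mb: "m * b \<le> b"
    using hm hab(1) by (simp add: mult_left_le_one_le)
  have "is_interval (interior I)"
    using hI(1) by (simp add: is_interval_convex_1)
  then have K_sub: "{m * a..b} \<subseteq> interior I"
    using hab(2,3) unfolding is_interval_1 by (meson atLeastAtMost_iff subsetI)
  have der: "(f has_real_derivative f' x) (at x)" if "x \<in> {m * a..m * b}" for x
    using that mb K_sub hderiv by (meson atLeastAtMost_iff order_trans subsetD)
  have cont: "continuous_on {m * a..m * b} f"
    by (rule continuous_at_imp_continuous_on) (use der DERIV_isCont in blast)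
  show ?thesis
  proof (rule alpha_m_convex_RL_midpoint_inequality[OF h\<theta> p hq pq hm(1) h\<alpha>(1) hab(1) cont der
        set_borel_integral_eq_integral(1)[OF hint] hconv])
    show "a \<in> {m * a..b}" "b \<in> {m * a..b}" "{m * a..m * b} \<subseteq> {m * a..b}"
      using ma mb hab(1) by auto
  qed auto
qed

end
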